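(* For every $n \in \mathbb{N}$ there are MILP instances $I_1$ and $I_2$ with $n \times n$ constraint matrices $A_1$ and $A_2$ respectively, such that $A_1$ has primal, dual and incidence treewidth bounded by an absolute constant and $\|A_1\|_\infty = 2$, $A_2$ is a 4-block $n$-fold matrix all of whose blocks are the $1\times 1$ matrix $(1)$, and the fractionality of $I_1$ is $2^{\Omega(n)}$ while the fractionality of $I_2$ is $\Omega(n)$.
   Context: An MILP instance is $\min\{\mathbf{c}\mathbf{x} \mid A\mathbf{x}=\mathbf{b},\ \mathbf{l}\le\mathbf{x}\le\mathbf{u},\ \mathbf{x}\in\mathbb{Z}^z\times\mathbb{Q}^q\}$ with integral data. The fractionality of an instance is the minimum, over all optimal solutions $\mathbf{x}$, of the largest denominator among the entries of $\mathbf{x}$ written in lowest terms. The primal graph of $A$ has the columns as vertices, adjacent if some row is non-zero in both; the dual graph is the primal graph of $A^{\intercal}$; the incidence graph is the bipartite graph on rows and columns with a row adjacent to a column if the corresponding entry is non-zero; primal/dual/incidence treewidth is the treewidth of these graphs. A 4-block $n$-fold matrix has the block form $\begin{pmatrix} C & D & D & \cdots & D \\ B & A & & & \\ B & & A & & \\ \vdots & & & \ddots & \\ B & & & & A\end{pmatrix}$ (other blocks zero) for blocks $A,B,C,D$. *)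

theory Defs
  imports Complex_Main
begin

text \<open>Columns (variables) are indexed 0..<ncols, rows 0..<nrows; the first nint variables
  are the integer ones (z = nint, q = ncols - nint).\<close>

record milp =
  mat  :: "nat \<Rightarrow> nat \<Rightarrow> int"
  nrows :: nat
  ncols :: nat
  rhs  :: "nat \<Rightarrow> int"
  obj  :: "nat \<Rightarrow> int"
  lb   :: "nat \<Rightarrow> int"
  ub   :: "nat \<Rightarrow> int"
  nint :: nat

definition milp_wf :: "milp \<Rightarrow> bool" where
  "milp_wf I \<longleftrightarrow> nint I \<le> ncols I"

definition feasible :: "milp \<Rightarrow> (nat \<Rightarrow> rat) \<Rightarrow> bool" where
  "feasible I x \<longleftrightarrow>
     (\<forall>i<nrows I. (\<Sum>j<ncols I. of_int (mat I i j) * x j) = of_int (rhs I i)) \<and>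
     (\<forall>j<ncols I. of_int (lb I j) \<le> x j \<and> x j \<le> of_int (ub I j)) \<and>
     (\<forall>j<nint I. x j \<in> \<int>) \<and>
     (\<forall>j\<ge>ncols I. x j = 0)"

definition objval :: "milp \<Rightarrow> (nat \<Rightarrow> rat) \<Rightarrow> rat" where
  "objval I x = (\<Sum>j<ncols I. of_int (obj I j) * x j)"

definition optimal :: "milp \<Rightarrow> (nat \<Rightarrow> rat) \<Rightarrow> bool" where
  "optimal I x \<longleftrightarrow> feasible I x \<and> (\<forall>y. feasible I y \<longrightarrow> objval I x \<le> objval I y)"

definition has_optimum :: "milp \<Rightarrow> bool" where
  "has_optimum I \<longleftrightarrow> (\<exists>x. optimal I x)"

definition denom :: "rat \<Rightarrow> nat" where
  "denom q = nat (snd (quotient_of q))"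

definition max_denom :: "milp \<Rightarrow> (nat \<Rightarrow> rat) \<Rightarrow> nat" where
  "max_denom I x = Max (insert 1 ((\<lambda>j. denom (x j)) ` {..<ncols I}))"

text \<open>Fractionality: minimum over optimal solutions of the largest denominator
  (meaningful when the instance has an optimal solution).\<close>
definition fractionality :: "milp \<Rightarrow> nat" where
  "fractionality I = (LEAST d. \<exists>x. optimal I x \<and> max_denom I x = d)"

text \<open>A tree on a finite nonempty node set N with symmetric irreflexive edge relation F:
  connected with exactly card N - 1 (undirected) edges.\<close>
definition is_tree :: "nat set \<Rightarrow> (nat \<times> nat) set \<Rightarrow> bool" where
  "is_tree N F \<longleftrightarrow> finite N \<and> N \<noteq> {} \<and> F \<subseteq> N \<times> N \<and> sym F \<and> irrefl F \<and>
     (\<forall>s\<in>N. \<forall>t\<in>N. (s, t) \<in> F\<^sup>*) \<and> card F = 2 * (card N - 1)"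

definition tree_decomposition ::
  "'v set \<Rightarrow> ('v \<times> 'v) set \<Rightarrow> nat set \<Rightarrow> (nat \<times> nat) set \<Rightarrow> (nat \<Rightarrow> 'v set) \<Rightarrow> bool" where
  "tree_decomposition V E N F bag \<longleftrightarrow>
     is_tree N F \<and>
     (\<forall>t\<in>N. bag t \<subseteq> V) \<and>
     (\<forall>v\<in>V. \<exists>t\<in>N. v \<in> bag t) \<and>
     (\<forall>(u, v)\<in>E. \<exists>t\<in>N. u \<in> bag t \<and> v \<in> bag t) \<and>
     (\<forall>v\<in>V. \<forall>s\<in>N. \<forall>t\<in>N. v \<in> bag s \<longrightarrow> v \<in> bag t \<longrightarrow>
        (s, t) \<in> (F \<inter> {(a, b). v \<in> bag a \<and> v \<in> bag b})\<^sup>*)"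

definition decomp_width :: "nat set \<Rightarrow> (nat \<Rightarrow> 'v set) \<Rightarrow> nat" where
  "decomp_width N bag = Max ((\<lambda>t. card (bag t)) ` N) - 1"

definition treewidth :: "'v set \<Rightarrow> ('v \<times> 'v) set \<Rightarrow> nat" where
  "treewidth V E = (LEAST k. \<exists>N F bag. tree_decomposition V E N F bag \<and> decomp_width N bag = k)"

definition primal_graph :: "(nat \<Rightarrow> nat \<Rightarrow> int) \<Rightarrow> nat \<Rightarrow> nat \<Rightarrow> (nat \<times> nat) set" where
  "primal_graph A m d = {(j, j'). j < d \<and> j' < d \<and> j \<noteq> j' \<and> (\<exists>i<m. A i j \<noteq> 0 \<and> A i j' \<noteq> 0)}"

definition dual_graph :: "(nat \<Rightarrow> nat \<Rightarrow> int) \<Rightarrow> nat \<Rightarrow> nat \<Rightarrow> (nat \<times> nat) set" where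
  "dual_graph A m d = {(i, i'). i < m \<and> i' < m \<and> i \<noteq> i' \<and> (\<exists>j<d. A i j \<noteq> 0 \<and> A i' j \<noteq> 0)}"

definition incidence_graph :: "(nat \<Rightarrow> nat \<Rightarrow> int) \<Rightarrow> nat \<Rightarrow> nat \<Rightarrow> ((nat + nat) \<times> (nat + nat)) set" where
  "incidence_graph A m d =
     {(Inl i, Inr j) | i j. i < m \<and> j < d \<and> A i j \<noteq> 0} \<union>
     {(Inr j, Inl i) | i j. i < m \<and> j < d \<and> A i j \<noteq> 0}"

definition primal_tw :: "(nat \<Rightarrow> nat \<Rightarrow> int) \<Rightarrow> nat \<Rightarrow> nat \<Rightarrow> nat" where
  "primal_tw A m d = treewidth {..<d} (primal_graph A m d)"

definition dual_tw :: "(nat \<Rightarrow> nat \<Rightarrow> int) \<Rightarrow> nat \<Rightarrow> nat \<Rightarrow> nat" where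
  "dual_tw A m d = treewidth {..<m} (dual_graph A m d)"

definition incidence_tw :: "(nat \<Rightarrow> nat \<Rightarrow> int) \<Rightarrow> nat \<Rightarrow> nat \<Rightarrow> nat" where
  "incidence_tw A m d = treewidth (Inl ` {..<m} \<union> Inr ` {..<d}) (incidence_graph A m d)"

definition max_norm :: "(nat \<Rightarrow> nat \<Rightarrow> int) \<Rightarrow> nat \<Rightarrow> nat \<Rightarrow> int" where
  "max_norm A m d = Max ({0} \<union> {\<bar>A i j\<bar> | i j. i < m \<and> j < d})"

text \<open>Blocks: C is r\<times>s, D is r\<times>t, B is p\<times>s, A is p\<times>t; k copies.
  The result has r + k*p rows and s + k*t columns; entries outside are 0.\<close>
definition four_block_nfold ::
  "nat \<Rightarrow> nat \<Rightarrow> nat \<Rightarrow> nat \<Rightarrow> nat \<Rightarrow>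
   (nat \<Rightarrow> nat \<Rightarrow> int) \<Rightarrow> (nat \<Rightarrow> nat \<Rightarrow> int) \<Rightarrow> (nat \<Rightarrow> nat \<Rightarrow> int) \<Rightarrow> (nat \<Rightarrow> nat \<Rightarrow> int) \<Rightarrow>
   nat \<Rightarrow> nat \<Rightarrow> int" where
  "four_block_nfold k r s p t Am Bm Cm Dm i j =
     (if i < r + k * p \<and> j < s + k * t then
        (if i < r then
           (if j < s then Cm i j else Dm i ((j - s) mod t))
         else
           (if j < s then Bm ((i - r) mod p) j
            else if (j - s) div t = (i - r) div p then Am ((i - r) mod p) ((j - s) mod t)
            else 0))
      else 0)"

end

theory Submission
  imports Defs
begin

text \<open>Both instances have zero objective, so every feasible point is optimal, and both
  have a unique feasible point. In the first, the bidiagonal system 2 x(0) = 2 and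
  x(i - 1) = 2 x(i) forces x(j) = 2^(-j); its primal, dual and incidence graphs are paths,
  hence of treewidth 1. In the second, the 4-block n-fold matrix with 1 \<times> 1 blocks is
  the arrowhead matrix (first row, first column and diagonal equal to 1); the rows
  x(0) + x(2) = 1, x(0) + x(i) = 0 for i \<noteq> 0, 2, and x(0) + ... + x(n - 1) = 0
  force x(0) = 1/(n - 2).\<close>

lemma denom_one_div_of_nat: "k > 0 \<Longrightarrow> denom (1 / of_nat k) = k"
proof -
  assume "k > 0"
  have "(1::rat) / of_nat k = Fract 1 (int k)" by (simp add: Fract_of_int_quotient)
  with \<open>k > 0\<close> show ?thesis by (simp add: denom_def quotient_of_Fract)
qed

lemma denom_le_max_denom: "j < ncols I \<Longrightarrow> denom (x j) \<le> max_denom I x"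
  unfolding max_denom_def by (rule Max_ge) auto

lemma optimal_iff_feasible_if_zero_obj: "obj I = (\<lambda>_. 0) \<Longrightarrow> optimal I x \<longleftrightarrow> feasible I x"
  by (simp add: optimal_def objval_def)

lemma fractionality_ge_if_forced_entry:
  assumes "has_optimum I" and "j < ncols I"
    and forced: "\<And>x. optimal I x \<Longrightarrow> x j = 1 / of_nat k"
  shows "k \<le> fractionality I"
proof (cases "k = 0")
  case False
  have "\<exists>d x. optimal I x \<and> max_denom I x = d" using assms(1) has_optimum_def by blast
  then have "\<exists>x. optimal I x \<and> max_denom I x = fractionality I"
    unfolding fractionality_def by (rule LeastI_ex)
  then obtain x where x: "optimal I x" "max_denom I x = fractionality I" by blast
  have "k = denom (x j)" using forced[OF x(1)] False by (simp add: denom_one_div_of_nat)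
  also have "\<dots> \<le> fractionality I" using denom_le_max_denom[OF assms(2), of x] x(2) by simp
  finally show ?thesis .
qed simp

section \<open>Graphs laid out along a path have treewidth at most one\<close>

definition path_edges :: "nat \<Rightarrow> (nat \<times> nat) set" where
  "path_edges m = {(a, b). a < m \<and> b < m \<and> (a = b + 1 \<or> b = a + 1)}"

lemma path_edges_connected:
  assumes "s < m" "t < m"
  shows "(s, t) \<in> (path_edges m)\<^sup>*"
proof -
  have from_0: "(0, t) \<in> (path_edges m)\<^sup>*" if "t < m" for t
    using that
  proof (induction t)
    case (Suc t)
    then have "(t, Suc t) \<in> path_edges m" unfolding path_edges_def by auto
    with Suc show ?case by (meson Suc_lessD rtrancl.rtrancl_into_rtrancl)
  qed simp
  have "sym ((path_edges m)\<^sup>*)" by (rule sym_rtrancl) (auto simp: path_edges_def sym_def)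
  then have "(s, 0) \<in> (path_edges m)\<^sup>*" using from_0[OF assms(1)] by (meson symD)
  with from_0[OF assms(2)] show ?thesis by simp
qed

lemma card_path_edges: "card (path_edges m) = 2 * (m - 1)"
proof -
  have "path_edges m = (\<lambda>a. (a, a + 1)) ` {..<m - 1} \<union> (\<lambda>a. (a + 1, a)) ` {..<m - 1}"
    unfolding path_edges_def by (auto simp: image_def)
  moreover have "(\<lambda>a. (a, a + 1)) ` {..<m - 1} \<inter> (\<lambda>a. (a + 1, a)) ` {..<m - 1} = {}" by auto
  ultimately have "card (path_edges m) =
      card ((\<lambda>a. (a, a + 1)) ` {..<m - 1}) + card ((\<lambda>a. (a + 1, a)) ` {..<m - 1})"
    by (simp add: card_Un_disjoint)
  also have "\<dots> = 2 * (m - 1)" by (simp add: card_image inj_on_def)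
  finally show ?thesis .
qed

lemma is_tree_path: "m \<ge> 1 \<Longrightarrow> is_tree {..<m} (path_edges m)"
  unfolding is_tree_def using path_edges_connected card_path_edges
  by (auto simp: path_edges_def sym_def irrefl_def lessThan_empty_iff)

lemma treewidth_le_decomp_width:
  "tree_decomposition V E N F bag \<Longrightarrow> treewidth V E \<le> decomp_width N bag"
  unfolding treewidth_def by (rule Least_le) blast

definition path_bags :: "('v \<Rightarrow> nat) \<Rightarrow> 'v set \<Rightarrow> nat \<Rightarrow> 'v set" where
  "path_bags f V t = {v\<in>V. f v = t \<or> f v = t + 1}"

lemma tree_decomposition_path_bags:
  fixes f :: "'v \<Rightarrow> nat"
  assumes range: "\<forall>v\<in>V. f v < m" and "m \<ge> 1"
    and "E \<subseteq> V \<times> V" and adjacent: "\<forall>(u, v)\<in>E. f u \<le> f v + 1 \<and> f v \<le> f u + 1"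
  shows "tree_decomposition V E {..<m} (path_edges m) (path_bags f V)"
  unfolding tree_decomposition_def
proof (intro conjI)
  show "is_tree {..<m} (path_edges m)" using \<open>m \<ge> 1\<close> by (rule is_tree_path)
  show "\<forall>(u, v)\<in>E. \<exists>t\<in>{..<m}. u \<in> path_bags f V t \<and> v \<in> path_bags f V t"
  proof clarify
    fix u v assume "(u, v) \<in> E"
    with \<open>E \<subseteq> V \<times> V\<close> adjacent range have "u \<in> V" "v \<in> V" "f u < m" "f v < m"
      "f u \<le> f v + 1" "f v \<le> f u + 1" by auto
    then show "\<exists>t\<in>{..<m}. u \<in> path_bags f V t \<and> v \<in> path_bags f V t"
      unfolding path_bags_def by (intro bexI[of _ "min (f u) (f v)"]) auto
  qed
  show "\<forall>v\<in>V. \<forall>s\<in>{..<m}. \<forall>t\<in>{..<m}. v \<in> path_bags f V s \<longrightarrow> v \<in> path_bags f V t \<longrightarrow>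
      (s, t) \<in> (path_edges m \<inter> {(a, b). v \<in> path_bags f V a \<and> v \<in> path_bags f V b})\<^sup>*"
  proof (intro ballI impI)
    fix v s t assume "s \<in> {..<m}" "t \<in> {..<m}" "v \<in> path_bags f V s" "v \<in> path_bags f V t"
    then have "s = t \<or>
        (s, t) \<in> path_edges m \<inter> {(a, b). v \<in> path_bags f V a \<and> v \<in> path_bags f V b}"
      unfolding path_bags_def path_edges_def by auto
    then show "(s, t) \<in> (path_edges m \<inter> {(a, b). v \<in> path_bags f V a \<and> v \<in> path_bags f V b})\<^sup>*"
      by auto
  qed
qed (use range in \<open>auto simp: path_bags_def\<close>)

lemma decomp_width_path_bags:
  assumes "inj_on f V" and "m \<ge> 1"
  shows "decomp_width {..<m} (path_bags f V) \<le> 1"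
proof -
  have "card (path_bags f V t) \<le> 2" for t
  proof -
    have "card (path_bags f V t) = card (f ` path_bags f V t)"
      using assms(1) by (intro card_image[symmetric]) (auto simp: path_bags_def intro: inj_on_subset)
    also have "\<dots> \<le> card {t, t + 1}" by (rule card_mono) (auto simp: path_bags_def)
    finally show ?thesis by (simp add: card_insert_le_m1)
  qed
  then have "Max ((\<lambda>t. card (path_bags f V t)) ` {..<m}) \<le> 2"
    using assms(2) by (intro Max.boundedI) (auto simp: lessThan_empty_iff)
  then show ?thesis unfolding decomp_width_def by simp
qed

lemma treewidth_le_1_if_path_layout:
  fixes f :: "'v \<Rightarrow> nat"
  assumes "inj_on f V" and "\<forall>v\<in>V. f v < m" and "m \<ge> 1"
    and "E \<subseteq> V \<times> V" and "\<forall>(u, v)\<in>E. f u \<le> f v + 1 \<and> f v \<le> f u + 1"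
  shows "treewidth V E \<le> 1"
proof -
  have "treewidth V E \<le> decomp_width {..<m} (path_bags f V)"
    using tree_decomposition_path_bags[OF assms(2-5)] by (rule treewidth_le_decomp_width)
  also have "\<dots> \<le> 1" using assms(1,3) by (rule decomp_width_path_bags)
  finally show ?thesis .
qed

definition halving_matrix :: "nat \<Rightarrow> nat \<Rightarrow> int" where
  "halving_matrix i j =
     (if j = i then (if i = 0 then 2 else -2) else if j + 1 = i then 1 else 0)"

definition halving_instance :: "nat \<Rightarrow> milp" where
  "halving_instance n = \<lparr>mat = halving_matrix, nrows = n, ncols = n,
     rhs = (\<lambda>i. if i = 0 then 2 else 0), obj = (\<lambda>_. 0), lb = (\<lambda>_. 0), ub = (\<lambda>_. 1), nint = 0\<rparr>"

lemma halving_instance_simps: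
  "milp_wf (halving_instance n)" "mat (halving_instance n) = halving_matrix"
  "nrows (halving_instance n) = n" "ncols (halving_instance n) = n"
  by (simp_all add: halving_instance_def milp_wf_def)

lemma halving_matrix_row:
  fixes y :: "nat \<Rightarrow> rat"
  assumes "i < n"
  shows "(\<Sum>j<n. of_int (halving_matrix i j) * y j) =
    (if i = 0 then 2 * y 0 else y (i - 1) - 2 * y i)"
proof (cases "i = 0")
  case True
  have "(\<Sum>j<n. of_int (halving_matrix i j) * y j) = (\<Sum>j<n. if j = 0 then 2 * y j else 0)"
    by (rule sum.cong) (auto simp: halving_matrix_def True)
  with True assms show ?thesis by simp
next
  case False
  have "(\<Sum>j<n. of_int (halving_matrix i j) * y j) =
      (\<Sum>j<n. (if j = i then - 2 * y j else 0) + (if j = i - 1 then y j else 0))"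
    by (rule sum.cong) (use False in \<open>auto simp: halving_matrix_def\<close>)
  moreover have "i - 1 < n" using assms by simp
  ultimately show ?thesis using False assms by (simp add: sum.distrib sum.delta)
qed

lemma feasible_halving_instance_iff:
  "feasible (halving_instance n) y \<longleftrightarrow> (\<forall>j. y j = (if j < n then 1 / 2 ^ j else 0))"
proof
  assume feasible: "feasible (halving_instance n) y"
  have "y j = 1 / 2 ^ j" if "j < n" for j
    using that
  proof (induction j)
    case 0
    with feasible show ?case
      using halving_matrix_row[OF 0, of y] by (auto simp: feasible_def halving_instance_def)
  next
    case (Suc j)
    with feasible have "y j - 2 * y (Suc j) = 0"
      using halving_matrix_row[OF Suc(2), of y] by (auto simp: feasible_def halving_instance_def)
    with Suc show ?case by simp
  qed
  with feasible show "\<forall>j. y j = (if j < n then 1 / 2 ^ j else 0)"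
    by (auto simp: feasible_def halving_instance_def)
next
  assume y: "\<forall>j. y j = (if j < n then 1 / 2 ^ j else 0)"
  have "(\<Sum>j<n. of_int (halving_matrix i j) * y j) = (if i = 0 then 2 else 0)" if "i < n" for i
    using halving_matrix_row[OF that, of y] that y by (cases i) auto
  with y show "feasible (halving_instance n) y"
    by (auto simp: feasible_def halving_instance_def)
qed

lemma fractionality_halving_instance:
  assumes "n \<ge> 1"
  shows "has_optimum (halving_instance n)" "2 ^ (n - 1) \<le> fractionality (halving_instance n)"
proof -
  have optimal_iff: "optimal (halving_instance n) y \<longleftrightarrow> feasible (halving_instance n) y" for y
    by (rule optimal_iff_feasible_if_zero_obj) (simp add: halving_instance_def)
  show "has_optimum (halving_instance n)"
    unfolding has_optimum_def optimal_iff feasible_halving_instance_iff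
    by (rule exI[of _ "\<lambda>j. if j < n then 1 / 2 ^ j else 0"]) simp
  moreover have "n - 1 < ncols (halving_instance n)" using assms by (simp add: halving_instance_simps)
  ultimately show "2 ^ (n - 1) \<le> fractionality (halving_instance n)"
    using assms by (intro fractionality_ge_if_forced_entry[where j = "n - 1"])
      (auto simp: optimal_iff feasible_halving_instance_iff)
qed

lemma inj_case_sum_even_odd: "inj (case_sum (\<lambda>i. 2 * i) (\<lambda>j. 2 * j + 1) :: nat + nat \<Rightarrow> nat)"
  unfolding inj_def by (auto split: sum.split) presburger+

lemma halving_matrix_treewidths:
  assumes "n \<ge> 1"
  shows "primal_tw halving_matrix n n \<le> 1" "dual_tw halving_matrix n n \<le> 1"
    "incidence_tw halving_matrix n n \<le> 1"
proof -
  show "primal_tw halving_matrix n n \<le> 1" unfolding primal_tw_def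
    by (rule treewidth_le_1_if_path_layout[where f = id and m = n])
      (use assms in \<open>auto simp: primal_graph_def halving_matrix_def split: if_splits\<close>)
  show "dual_tw halving_matrix n n \<le> 1" unfolding dual_tw_def
    by (rule treewidth_le_1_if_path_layout[where f = id and m = n])
      (use assms in \<open>auto simp: dual_graph_def halving_matrix_def split: if_splits\<close>)
  let ?f = "case_sum (\<lambda>i. 2 * i) (\<lambda>j. 2 * j + 1) :: nat + nat \<Rightarrow> nat"
  have inj: "inj_on ?f (Inl ` {..<n} \<union> Inr ` {..<n})"
    by (rule inj_on_subset[OF inj_case_sum_even_odd subset_UNIV])
  have range: "\<forall>v\<in>Inl ` {..<n} \<union> Inr ` {..<n}. ?f v < 2 * n" by auto
  have subset: "incidence_graph halving_matrix n n \<subseteq>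
      (Inl ` {..<n} \<union> Inr ` {..<n}) \<times> (Inl ` {..<n} \<union> Inr ` {..<n})"
    unfolding incidence_graph_def by auto
  have adjacent: "\<forall>(u, v)\<in>incidence_graph halving_matrix n n. ?f u \<le> ?f v + 1 \<and> ?f v \<le> ?f u + 1"
    unfolding incidence_graph_def halving_matrix_def by (auto split: if_splits)
  show "incidence_tw halving_matrix n n \<le> 1" unfolding incidence_tw_def
    by (rule treewidth_le_1_if_path_layout[OF inj range _ subset adjacent]) (use assms in simp)
qed

lemma max_norm_halving_matrix:
  assumes "n \<ge> 1"
  shows "max_norm halving_matrix n n = 2"
  unfolding max_norm_def
proof (rule Max_eqI)
  let ?entries = "{\<bar>halving_matrix i j\<bar> | i j. i < n \<and> j < n}"
  have "{0} \<union> ?entries \<subseteq> {0, 1, 2}" by (auto simp: halving_matrix_def)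
  then show "finite ({0} \<union> ?entries)" by (rule finite_subset) simp
  show "y \<le> 2" if "y \<in> {0} \<union> ?entries" for y
    using that by (auto simp: halving_matrix_def)
  have "\<bar>halving_matrix 0 0\<bar> \<in> ?entries" using assms by (intro CollectI exI[of _ 0]) simp
  then show "2 \<in> {0} \<union> ?entries" by (simp add: halving_matrix_def)
qed

definition arrowhead_matrix :: "nat \<Rightarrow> nat \<Rightarrow> nat \<Rightarrow> int" where
  "arrowhead_matrix n =
     four_block_nfold (n - 1) 1 1 1 1 (\<lambda>_ _. 1) (\<lambda>_ _. 1) (\<lambda>_ _. 1) (\<lambda>_ _. 1)"

lemma arrowhead_matrix_eq:
  "i < n \<Longrightarrow> j < n \<Longrightarrow> arrowhead_matrix n i j = (if i = 0 \<or> j = 0 \<or> i = j then 1 else 0)"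
  by (auto simp: arrowhead_matrix_def four_block_nfold_def)

text \<open>The right-hand side 1 sits in row 2 rather than row 1: for n = 2 the rows 0 and 1
  coincide, so their right-hand sides must agree for the instance to be feasible.\<close>

definition arrowhead_instance :: "nat \<Rightarrow> milp" where
  "arrowhead_instance n = \<lparr>mat = arrowhead_matrix n, nrows = n, ncols = n,
     rhs = (\<lambda>i. if i = 2 then 1 else 0),
     obj = (\<lambda>_. 0), lb = (\<lambda>_. -1), ub = (\<lambda>_. 1), nint = 0\<rparr>"

lemma sum_two_special:
  fixes a b d :: "'a::comm_ring_1"
  assumes "p < n" "q < n" "p \<noteq> q"
  shows "(\<Sum>j<n. if j = p then a else if j = q then b else d) = a + b + of_nat (n - 2) * d"
proof -
  have "(\<Sum>j<n. if j = p then a else if j = q then b else d) =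
      (\<Sum>j<n. d + (if j = p then a - d else 0) + (if j = q then b - d else 0))"
    by (rule sum.cong) (use assms(3) in auto)
  also have "\<dots> = of_nat n * d + (a - d) + (b - d)"
    using assms by (simp add: sum.distrib sum.delta)
  also have "\<dots> = a + b + of_nat (n - 2) * d"
    using assms by (simp add: of_nat_diff algebra_simps)
  finally show ?thesis .
qed

lemma arrowhead_instance_simps:
  "milp_wf (arrowhead_instance n)" "mat (arrowhead_instance n) = arrowhead_matrix n"
  "nrows (arrowhead_instance n) = n" "ncols (arrowhead_instance n) = n"
  by (simp_all add: arrowhead_instance_def milp_wf_def)

lemma arrowhead_matrix_row:
  fixes y :: "nat \<Rightarrow> rat"
  assumes "i < n"
  shows "(\<Sum>j<n. of_int (arrowhead_matrix n i j) * y j) =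
    (if i = 0 then (\<Sum>j<n. y j) else y 0 + y i)"
proof (cases "i = 0")
  case False
  have "(\<Sum>j<n. of_int (arrowhead_matrix n i j) * y j) =
      (\<Sum>j<n. (if j = 0 then y j else 0) + (if j = i then y j else 0))"
    by (rule sum.cong) (use False assms in \<open>auto simp: arrowhead_matrix_eq\<close>)
  with False assms show ?thesis by (simp add: sum.distrib)
qed (use assms in \<open>simp add: arrowhead_matrix_eq\<close>)

lemma feasible_arrowhead_instance:
  "feasible (arrowhead_instance n)
     (\<lambda>j. if 3 \<le> n \<and> j < n then
            (if j = 0 then 1 / of_nat (n - 2) else if j = 2 then 1 - 1 / of_nat (n - 2)
             else - 1 / of_nat (n - 2))
          else 0)"
  (is "feasible _ ?x")
proof (cases "3 \<le> n")
  case True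
  have "(\<Sum>j<n. ?x j) = (\<Sum>j<n. if j = 0 then 1 / of_nat (n - 2)
      else if j = 2 then 1 - 1 / of_nat (n - 2) else - 1 / of_nat (n - 2))"
    by (rule sum.cong) (use True in auto)
  also have "\<dots> = 0" using True by (simp add: sum_two_special)
  finally have "(\<Sum>j<n. ?x j) = 0" .
  with True show ?thesis
    by (auto simp: feasible_def arrowhead_instance_def arrowhead_matrix_row field_simps)
qed (auto simp: feasible_def arrowhead_instance_def arrowhead_matrix_row)

lemma feasible_arrowhead_instance_first_entry:
  assumes "feasible (arrowhead_instance n) y" "3 \<le> n"
  shows "y 0 = 1 / of_nat (n - 2)"
proof -
  have rows: "(\<Sum>j<n. of_int (arrowhead_matrix n i j) * y j) = (if i = 2 then 1 else 0)"
    if "i < n" for i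
    using assms that by (auto simp: feasible_def arrowhead_instance_def)
  have other_entries: "y i = (if i = 2 then 1 else 0) - y 0" if "i < n" "i \<noteq> 0" for i
    using rows[OF that(1)] arrowhead_matrix_row[OF that(1), of y] that by auto
  have "0 = (\<Sum>j<n. y j)" using rows[of 0] arrowhead_matrix_row[of 0 n y] assms(2) by simp
  also have "\<dots> = (\<Sum>j<n. if j = 0 then y 0 else if j = 2 then 1 - y 0 else - y 0)"
    by (rule sum.cong) (auto simp: other_entries)
  also have "\<dots> = 1 - of_nat (n - 2) * y 0"
    using assms(2) by (simp add: sum_two_special)
  finally have "of_nat (n - 2) * y 0 = 1" by linarith
  moreover have "(of_nat (n - 2) :: rat) \<noteq> 0" using assms(2) by simp
  ultimately show ?thesis by (metis nonzero_eq_divide_eq mult.commute)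
qed

lemma fractionality_arrowhead_instance:
  shows "has_optimum (arrowhead_instance n)"
    and "3 \<le> n \<Longrightarrow> n - 2 \<le> fractionality (arrowhead_instance n)"
proof -
  have optimal_iff: "optimal (arrowhead_instance n) y \<longleftrightarrow> feasible (arrowhead_instance n) y" for y
    by (rule optimal_iff_feasible_if_zero_obj) (simp add: arrowhead_instance_def)
  show "has_optimum (arrowhead_instance n)"
    unfolding has_optimum_def optimal_iff using feasible_arrowhead_instance by blast
  moreover assume "3 \<le> n"
  moreover have "0 < ncols (arrowhead_instance n)" using \<open>3 \<le> n\<close> by (simp add: arrowhead_instance_simps)
  ultimately show "n - 2 \<le> fractionality (arrowhead_instance n)"
    using feasible_arrowhead_instance_first_entry
    by (intro fractionality_ge_if_forced_entry[where j = 0]) (auto simp: optimal_iff)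
qed

theorem lemma1:
  shows "\<exists>(K::nat) (c::real) (N::nat). c > 0 \<and> (\<forall>n\<ge>1. \<exists>I1 I2.
      milp_wf I1 \<and> nrows I1 = n \<and> ncols I1 = n \<and>
      primal_tw (mat I1) n n \<le> K \<and> dual_tw (mat I1) n n \<le> K \<and>
      incidence_tw (mat I1) n n \<le> K \<and> max_norm (mat I1) n n = 2 \<and>
      milp_wf I2 \<and> nrows I2 = n \<and> ncols I2 = n \<and>
      (\<forall>i<n. \<forall>j<n. mat I2 i j =
         four_block_nfold (n - 1) 1 1 1 1 (\<lambda>_ _. 1) (\<lambda>_ _. 1) (\<lambda>_ _. 1) (\<lambda>_ _. 1) i j) \<and>
      has_optimum I1 \<and> has_optimum I2 \<and>
      (n \<ge> N \<longrightarrow> real (fractionality I1) \<ge> 2 powr (c * real n) \<and>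
                   real (fractionality I2) \<ge> c * real n))"
proof -
  have exponential: "2 powr (1/3 * real n) \<le> real (fractionality (halving_instance n))"
    if "n \<ge> 3" for n
  proof -
    have "2 powr (1/3 * real n) \<le> 2 powr real (n - 1)" by (rule powr_mono) (use that in auto)
    also have "\<dots> = real (2 ^ (n - 1))" by (simp add: powr_realpow)
    also have "\<dots> \<le> real (fractionality (halving_instance n))"
      using fractionality_halving_instance(2) that by simp
    finally show ?thesis .
  qed
  have linear: "1/3 * real n \<le> real (fractionality (arrowhead_instance n))" if "n \<ge> 3" for n
    using fractionality_arrowhead_instance(2)[OF that] that by linarith
  show ?thesis
    apply (rule exI[of _ 1], rule exI[of _ "1/3"], rule exI[of _ 3], intro conjI allI impI)
    subgoal by simp
    subgoal for n
      apply (rule exI[of _ "halving_instance n"], rule exI[of _ "arrowhead_instance n"])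
      using halving_matrix_treewidths max_norm_halving_matrix fractionality_halving_instance(1)
        fractionality_arrowhead_instance(1) exponential linear
      by (simp add: halving_instance_simps arrowhead_instance_simps arrowhead_matrix_def)
    done
qed

end
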